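(* Let $k\ge3$ and $m\ge1$ be integers and consider any realization of the random $k$-Apollonian network $A(m)$. For an edge $e$ of $A(m)$ let $N^{\ast}(e)$ be the number of active $k$-cliques of $A(m)$ containing $e$. Let $F$ be the spanning forest of $A(m)$ defined as follows: for each $1\le t\le m$, if the vertex $x$ born in round $t$ was joined to the $k$-clique $C$, then in $F$ the vertex $x$ is joined to a vertex $u\in V(C)$ with $N^{\ast}(xu)=\max_{v\in V(C)}N^{\ast}(xv)$ (ties broken arbitrarily). If $xy\in E(F)$, $x$ is born later than $y$, and the degree of $x$ in $A(m)$ is at least $2k-1$, then $N^{\ast}(xy)\ge (k-1)^2/2$.
   Context: Random $k$-Apollonian process: $A(0)$ is a clique on $k$ vertices (born in round $0$), marked active. For $t\ge1$, $A(t)$ is obtained from $A(t-1)$ by choosing an active $k$-clique of $A(t-1)$ uniformly at random and creating a new vertex (born in round $t$) joined to all its vertices; the chosen clique becomes non-active and the $k$ new $k$-cliques containing the new vertex are marked active. *)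

theory Defs
  imports Complex_Main
begin

(* A realization of the random k-Apollonian process up to round m is encoded by
   the sequence C of chosen cliques: C t (t >= 1) is the active k-clique chosen in round t.
   Vertices are natural numbers: 0..k-1 are born in round 0, vertex k+t-1 is born in round t. *)

fun ap_active :: "nat \<Rightarrow> (nat \<Rightarrow> nat set) \<Rightarrow> nat \<Rightarrow> nat set set" where
  "ap_active k C 0 = {{0..<k}}"
| "ap_active k C (Suc t) =
     (ap_active k C t - {C (Suc t)}) \<union> (\<lambda>v. insert (k + t) (C (Suc t) - {v})) ` C (Suc t)"

fun ap_edges :: "nat \<Rightarrow> (nat \<Rightarrow> nat set) \<Rightarrow> nat \<Rightarrow> nat set set" where
  "ap_edges k C 0 = {{a, b} | a b. a < k \<and> b < k \<and> a \<noteq> b}"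
| "ap_edges k C (Suc t) = ap_edges k C t \<union> {{k + t, v} | v. v \<in> C (Suc t)}"

definition ap_valid :: "nat \<Rightarrow> (nat \<Rightarrow> nat set) \<Rightarrow> nat \<Rightarrow> bool" where
  "ap_valid k C m \<longleftrightarrow> (\<forall>t\<in>{1..m}. C t \<in> ap_active k C (t - 1))"

definition born :: "nat \<Rightarrow> nat \<Rightarrow> nat" where
  "born k v = (if v < k then 0 else v + 1 - k)"

definition Nstar :: "nat \<Rightarrow> (nat \<Rightarrow> nat set) \<Rightarrow> nat \<Rightarrow> nat \<Rightarrow> nat \<Rightarrow> nat" where
  "Nstar k C m a b = card {Q \<in> ap_active k C m. a \<in> Q \<and> b \<in> Q}"

definition ap_degree :: "nat \<Rightarrow> (nat \<Rightarrow> nat set) \<Rightarrow> nat \<Rightarrow> nat \<Rightarrow> nat" where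
  "ap_degree k C m x = card {y. {x, y} \<in> ap_edges k C m}"

definition forest_edges :: "nat \<Rightarrow> nat \<Rightarrow> (nat \<Rightarrow> nat) \<Rightarrow> nat set set" where
  "forest_edges k m p = {{k + t - 1, p t} | t. t \<in> {1..m}}"

end

theory Submission
  imports Defs
begin

text \<open>Fix the vertex \<open>x\<close> born in round \<open>t\<close>, attached to the clique \<open>D\<close>, and weigh every active
  clique \<open>Q\<close> through \<open>x\<close> by \<open>|Q \<inter> D|\<close>. Initially there are \<open>k\<close> such cliques of weight \<open>k - 1\<close>.
  Whenever a clique \<open>S\<close> through \<open>x\<close> of weight \<open>j\<close> is chosen, it is replaced by \<open>k - 1\<close> cliques
  through \<open>x\<close> of total weight \<open>(k - 2) j\<close>, so the total weight grows by \<open>(k - 3) j\<close>, while the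
  minimal weight drops by at most one. A degree of at least \<open>2k - 1\<close> forces \<open>k - 1\<close> such rounds,
  hence total weight at least \<open>k(k - 1) + (k - 3)((k - 1) + \<dots> + 1) = k(k - 1)\<^sup>2/2\<close>. The total
  weight equals \<open>\<Sum>\<^sub>v\<^sub>\<in>\<^sub>D N\<^sup>*(xv) \<le> k N\<^sup>*(xy)\<close> by the choice of \<open>y\<close>.\<close>

lemma sum_card_Int_eq_sum_card_containing:
  assumes "finite X" "finite D"
  shows "(\<Sum>Q\<in>X. card (Q \<inter> D)) = (\<Sum>v\<in>D. card {Q\<in>X. v \<in> Q})"
proof -
  have "card (Q \<inter> D) = (\<Sum>v\<in>D. if v \<in> Q then 1 else 0)" for Q
  proof -
    have "Q \<inter> D = {v\<in>D. v \<in> Q}" by blast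
    then show ?thesis using assms(2) by (simp add: sum.inter_filter[symmetric])
  qed
  then have "(\<Sum>Q\<in>X. card (Q \<inter> D)) = (\<Sum>Q\<in>X. \<Sum>v\<in>D. if v \<in> Q then 1 else 0)"
    by simp
  also have "\<dots> = (\<Sum>v\<in>D. \<Sum>Q\<in>X. if v \<in> Q then 1 else 0)"
    by (rule sum.swap)
  also have "\<dots> = (\<Sum>v\<in>D. card {Q\<in>X. v \<in> Q})"
    using assms(1) by (simp add: sum.inter_filter[symmetric])
  finally show ?thesis .
qed

lemma sum_card_Diff_singleton:
  assumes "finite S" "finite A"
  shows "(\<Sum>v\<in>S. card (A - {v})) + card (S \<inter> A) = card S * card A"
proof -
  have "card (A - {v}) + (if v \<in> A then 1 else 0) = card A" for v
    using card_Suc_Diff1[OF assms(2), of v] by (cases "v \<in> A") simp_all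
  then have "(\<Sum>v\<in>S. card (A - {v})) + (\<Sum>v\<in>S. if v \<in> A then 1 else 0) = card S * card A"
    by (simp add: sum.distrib[symmetric])
  moreover have "S \<inter> A = {v\<in>S. v \<in> A}" by blast
  ultimately show ?thesis
    using assms(1) by (simp add: sum.inter_filter[symmetric])
qed

lemma inj_on_insert_Diff_singleton:
  assumes "z \<notin> S"
  shows "inj_on (\<lambda>v. insert z (S - {v})) S"
proof (rule inj_onI)
  fix v w assume vw: "v \<in> S" "w \<in> S" "insert z (S - {v}) = insert z (S - {w})"
  show "v = w"
  proof (rule ccontr)
    assume "v \<noteq> w"
    then have "v \<in> insert z (S - {v})" using vw by blast
    then show False using assms vw(1) by blast
  qed
qed

text \<open>One round in which the chosen clique \<open>S\<close> contains \<open>x\<close>: the total weight of the cliques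
  through \<open>x\<close> changes from \<open>W\<close> to \<open>W - j + (|S| - 2) j\<close>, written without subtraction.\<close>

lemma sum_card_Int_replace:
  fixes X :: "'a set set"
  assumes "finite X" "S \<in> X" "finite S" "x \<in> S" "x \<notin> D" "z \<notin> D" "\<forall>Q\<in>X. z \<notin> Q"
  shows "(\<Sum>Q\<in>(X - {S}) \<union> (\<lambda>v. insert z (S - {v})) ` (S - {x}). card (Q \<inter> D)) + 2 * card (S \<inter> D)
         = (\<Sum>Q\<in>X. card (Q \<inter> D)) + (card S - 1) * card (S \<inter> D)"
proof -
  let ?g = "\<lambda>v. insert z (S - {v})"
  have zS: "z \<notin> S" using assms(2,7) by blast
  have disjoint: "(X - {S}) \<inter> ?g ` (S - {x}) = {}" using assms(7) by blast
  have inj: "inj_on ?g (S - {x})"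
    using inj_on_insert_Diff_singleton[OF zS] by (rule inj_on_subset) blast
  have "?g v \<inter> D = S \<inter> D - {v}" for v using assms(6) by blast
  then have "(\<Sum>Q\<in>?g ` (S - {x}). card (Q \<inter> D)) = (\<Sum>v\<in>S - {x}. card (S \<inter> D - {v}))"
    by (simp add: sum.reindex[OF inj])
  moreover have "(\<Sum>v\<in>S - {x}. card (S \<inter> D - {v})) + card (S \<inter> D) = (card S - 1) * card (S \<inter> D)"
  proof -
    have "(S - {x}) \<inter> (S \<inter> D) = S \<inter> D" using assms(5) by blast
    then show ?thesis
      using sum_card_Diff_singleton[of "S - {x}" "S \<inter> D"] assms(3,4) by simp
  qed
  moreover have "(\<Sum>Q\<in>X. card (Q \<inter> D)) = card (S \<inter> D) + (\<Sum>Q\<in>X - {S}. card (Q \<inter> D))"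
    using sum.remove[OF assms(1,2)] by simp
  moreover have "(\<Sum>Q\<in>(X - {S}) \<union> ?g ` (S - {x}). card (Q \<inter> D))
      = (\<Sum>Q\<in>X - {S}. card (Q \<inter> D)) + (\<Sum>Q\<in>?g ` (S - {x}). card (Q \<inter> D))"
    using assms(1,3) by (simp add: sum.union_disjoint[OF _ _ disjoint])
  ultimately show ?thesis by linarith
qed

lemma chosen_clique_active:
  "ap_valid k C m \<Longrightarrow> Suc s \<le> m \<Longrightarrow> C (Suc s) \<in> ap_active k C s"
  unfolding ap_valid_def by (metis One_nat_def Suc_le_mono atLeastAtMost_iff diff_Suc_1 le0)

lemma ap_active_cliques:
  assumes "ap_valid k C m" "s \<le> m"
  shows "finite (ap_active k C s) \<and> (\<forall>Q\<in>ap_active k C s. card Q = k \<and> Q \<subseteq> {..<k + s})"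
  using assms(2)
proof (induction s)
  case 0
  then show ?case by auto
next
  case (Suc s)
  let ?S = "C (Suc s)"
  have IH: "finite (ap_active k C s)" "\<And>Q. Q \<in> ap_active k C s \<Longrightarrow> card Q = k \<and> Q \<subseteq> {..<k + s}"
    using Suc by auto
  have S: "card ?S = k" "?S \<subseteq> {..<k + s}"
    using IH(2)[OF chosen_clique_active[OF assms(1) Suc.prems]] by auto
  then have fS: "finite ?S" using finite_subset by blast
  have "card (insert (k + s) (?S - {v})) = k" if "v \<in> ?S" for v
  proof -
    have "k + s \<notin> ?S - {v}" using S(2) by auto
    moreover have "card (?S - {v}) = k - 1" using S(1) fS that by (simp add: card_Diff_singleton)
    moreover have "k > 0" using S(1) fS that card_gt_0_iff by blast
    ultimately show ?thesis using fS by simp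
  qed
  then show ?case
    using IH S fS by (auto intro: less_SucI)
qed

lemma finite_ap_active: "ap_valid k C m \<Longrightarrow> s \<le> m \<Longrightarrow> finite (ap_active k C s)"
  using ap_active_cliques by blast

lemma ap_active_card: "ap_valid k C m \<Longrightarrow> s \<le> m \<Longrightarrow> Q \<in> ap_active k C s \<Longrightarrow> card Q = k"
  using ap_active_cliques by blast

lemma ap_active_subset: "ap_valid k C m \<Longrightarrow> s \<le> m \<Longrightarrow> Q \<in> ap_active k C s \<Longrightarrow> Q \<subseteq> {..<k + s}"
  using ap_active_cliques by blast

lemma ap_edges_neighbours:
  assumes "ap_valid k C m" "s \<le> m"
  shows "{y. {k + t, y} \<in> ap_edges k C s}
           \<subseteq> C (Suc t) \<union> (\<lambda>r. k + r - 1) ` {r\<in>{Suc t<..s}. k + t \<in> C r}"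
  using assms(2)
proof (induction s)
  case 0
  then show ?case by (auto simp: doubleton_eq_iff)
next
  case (Suc s)
  let ?R = "\<lambda>s. {r\<in>{Suc t<..s}. k + t \<in> C r}"
  show ?case
  proof
    fix y assume "y \<in> {y. {k + t, y} \<in> ap_edges k C (Suc s)}"
    then have y: "{k + t, y} \<in> ap_edges k C (Suc s)" by simp
    show "y \<in> C (Suc t) \<union> (\<lambda>r. k + r - 1) ` ?R (Suc s)"
    proof (cases "{k + t, y} \<in> ap_edges k C s")
      case True
      then have "y \<in> C (Suc t) \<union> (\<lambda>r. k + r - 1) ` ?R s" using Suc by auto
      moreover have "?R s \<subseteq> ?R (Suc s)" by auto
      ultimately show ?thesis by blast
    next
      case False
      then obtain v where v: "v \<in> C (Suc s)" "{k + t, y} = {k + s, v}" using y by auto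
      have "v < k + s"
        using v ap_active_subset[OF assms(1) _ chosen_clique_active[OF assms(1) Suc.prems]] Suc.prems
        by auto
      then consider "t = s" "y = v" | "v = k + t" "y = k + s" "t < s"
        using v(2) by (auto simp: doubleton_eq_iff)
      then show ?thesis
      proof cases
        case 1
        then show ?thesis using v(1) by simp
      next
        case 2
        then have "Suc s \<in> ?R (Suc s)" using v(1) by simp
        moreover have "y = k + Suc s - 1" using 2 by simp
        ultimately show ?thesis by blast
      qed
    qed
  qed
qed

definition active_through :: "nat \<Rightarrow> (nat \<Rightarrow> nat set) \<Rightarrow> nat \<Rightarrow> nat \<Rightarrow> nat set set" where
  "active_through k C s x = {Q\<in>ap_active k C s. x \<in> Q}"

definition hits :: "nat \<Rightarrow> (nat \<Rightarrow> nat set) \<Rightarrow> nat \<Rightarrow> nat \<Rightarrow> nat" where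
  "hits k C t s = card {r\<in>{Suc t<..s}. k + t \<in> C r}"

definition desc_sum :: "nat \<Rightarrow> nat \<Rightarrow> nat" where
  "desc_sum k c = (\<Sum>j = 1..c. k - j)"

lemma desc_sum_Suc: "desc_sum k (Suc c) = desc_sum k c + (k - Suc c)"
  unfolding desc_sum_def by simp

lemma desc_sum_mono: "a \<le> b \<Longrightarrow> desc_sum k a \<le> desc_sum k b"
  unfolding desc_sum_def by (rule sum_mono2) auto

lemma desc_sum_closed_form: "n \<le> k \<Longrightarrow> 2 * real (desc_sum k n) = real n * (2 * real k - real n - 1)"
proof (induction n)
  case (Suc n)
  then have "real (k - Suc n) = real k - real n - 1" by simp
  with Suc show ?case by (simp add: desc_sum_Suc algebra_simps)
qed (simp add: desc_sum_def)

text \<open>The bound on the minimal weight uses truncated subtraction: it becomes vacuous after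
  \<open>k - 1\<close> hits, but by then the total-weight bound has done its work.\<close>

definition weight_invariant :: "nat \<Rightarrow> (nat \<Rightarrow> nat set) \<Rightarrow> nat \<Rightarrow> nat \<Rightarrow> bool" where
  "weight_invariant k C t s \<longleftrightarrow>
     (\<forall>Q\<in>active_through k C s (k + t). k - 1 - hits k C t s \<le> card (Q \<inter> C (Suc t))) \<and>
     k * (k - 1) + (k - 3) * desc_sum k (hits k C t s)
       \<le> (\<Sum>Q\<in>active_through k C s (k + t). card (Q \<inter> C (Suc t)))"

lemma active_through_birth:
  assumes "ap_valid k C m" "Suc t \<le> m"
  shows "active_through k C (Suc t) (k + t) = (\<lambda>v. insert (k + t) (C (Suc t) - {v})) ` C (Suc t)"
proof -
  have "k + t \<notin> Q" if "Q \<in> ap_active k C t" for Q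
    using ap_active_subset[OF assms(1) _ that] assms(2) by auto
  then show ?thesis unfolding active_through_def by auto
qed

lemma weight_invariant_birth:
  assumes "ap_valid k C m" "Suc t \<le> m"
  shows "weight_invariant k C t (Suc t)"
proof -
  let ?D = "C (Suc t)"
  have DA: "?D \<in> ap_active k C t" using chosen_clique_active[OF assms] .
  have cD: "card ?D = k" using ap_active_card[OF assms(1) _ DA] assms(2) by simp
  have "?D \<subseteq> {..<k + t}" using ap_active_subset[OF assms(1) _ DA] assms(2) by simp
  then have xD: "k + t \<notin> ?D" and fD: "finite ?D" using finite_subset by auto
  have weight: "card (insert (k + t) (?D - {v}) \<inter> ?D) = k - 1" if "v \<in> ?D" for v
    using that xD fD cD by (simp add: Int_insert_left Int_absorb2 card_Diff_singleton)
  have "(\<Sum>Q\<in>active_through k C (Suc t) (k + t). card (Q \<inter> ?D)) = k * (k - 1)"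
    using weight cD
    by (simp add: active_through_birth[OF assms] sum.reindex[OF inj_on_insert_Diff_singleton[OF xD]])
  moreover have "hits k C t (Suc t) = 0" unfolding hits_def by simp
  ultimately show ?thesis
    using weight unfolding weight_invariant_def active_through_birth[OF assms] desc_sum_def by auto
qed

lemma active_through_Suc:
  assumes "ap_valid k C m" "Suc s \<le> m" "x < k + s"
  shows "active_through k C (Suc s) x =
    (if x \<in> C (Suc s)
     then (active_through k C s x - {C (Suc s)}) \<union> (\<lambda>v. insert (k + s) (C (Suc s) - {v})) ` (C (Suc s) - {x})
     else active_through k C s x)"
  using assms(3) unfolding active_through_def by auto

lemma hits_Suc:
  "Suc t \<le> s \<Longrightarrow> hits k C t (Suc s) = (if k + t \<in> C (Suc s) then Suc (hits k C t s) else hits k C t s)"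
proof -
  assume "Suc t \<le> s"
  then have "{r\<in>{Suc t<..Suc s}. k + t \<in> C r} =
    (if k + t \<in> C (Suc s) then insert (Suc s) else id) {r\<in>{Suc t<..s}. k + t \<in> C r}"
    by (auto simp: le_Suc_eq)
  then show ?thesis unfolding hits_def by simp
qed

lemma weight_invariant_Suc:
  assumes "ap_valid k C m" "k \<ge> 3" "Suc t \<le> s" "Suc s \<le> m" "weight_invariant k C t s"
  shows "weight_invariant k C t (Suc s)"
proof -
  let ?D = "C (Suc t)" and ?S = "C (Suc s)" and ?X = "active_through k C s (k + t)"
  let ?c = "hits k C t s" and ?j = "card (?S \<inter> ?D)"
  have lt: "k + t < k + s" using assms(3) by simp
  have min_old: "\<forall>Q\<in>?X. k - 1 - ?c \<le> card (Q \<inter> ?D)"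
    and sum_old: "k * (k - 1) + (k - 3) * desc_sum k ?c \<le> (\<Sum>Q\<in>?X. card (Q \<inter> ?D))"
    using assms(5) unfolding weight_invariant_def by auto
  show ?thesis
  proof (cases "k + t \<in> ?S")
    case False
    then show ?thesis
      using assms(5) unfolding weight_invariant_def
      by (simp add: active_through_Suc[OF assms(1,4) lt] hits_Suc[OF assms(3)])
  next
    case True
    let ?g = "\<lambda>v. insert (k + s) (?S - {v})"
    have SA: "?S \<in> ap_active k C s" using chosen_clique_active[OF assms(1,4)] .
    then have SX: "?S \<in> ?X" using True unfolding active_through_def by simp
    have sm: "s \<le> m" using assms(4) by simp
    have cS: "card ?S = k" using ap_active_card[OF assms(1) sm SA] .
    have fS: "finite ?S"
      using ap_active_subset[OF assms(1) sm SA] finite_subset by blast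
    have "?D \<subseteq> {..<k + t}"
      using ap_active_subset[OF assms(1) _ chosen_clique_active[OF assms(1)]] assms(3,4) by simp
    then have xD: "k + t \<notin> ?D" and zD: "k + s \<notin> ?D" using lt by auto
    have fX: "finite ?X"
      using finite_ap_active[OF assms(1) sm] unfolding active_through_def by simp
    have below: "\<forall>Q\<in>?X. k + s \<notin> Q"
      using ap_active_subset[OF assms(1) sm] unfolding active_through_def by blast
    have through: "active_through k C (Suc s) (k + t) = (?X - {?S}) \<union> ?g ` (?S - {k + t})"
      using active_through_Suc[OF assms(1,4) lt] True by simp
    have hit: "hits k C t (Suc s) = Suc ?c" using hits_Suc[OF assms(3)] True by simp
    have j_low: "k - 1 - ?c \<le> ?j" using min_old SX by blast
    have "k - 1 - Suc ?c \<le> card (?g v \<inter> ?D)" for v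
    proof -
      have "?g v \<inter> ?D = ?S \<inter> ?D - {v}" using zD by blast
      moreover have "?j \<le> card (?S \<inter> ?D - {v}) + 1" using fS by (simp add: card_Diff_singleton_if; arith)
      ultimately show ?thesis using j_low by simp
    qed
    then have min_new: "\<forall>Q\<in>active_through k C (Suc s) (k + t). k - 1 - Suc ?c \<le> card (Q \<inter> ?D)"
      using min_old unfolding through by fastforce
    have "(\<Sum>Q\<in>active_through k C (Suc s) (k + t). card (Q \<inter> ?D)) + 2 * ?j
          = (\<Sum>Q\<in>?X. card (Q \<inter> ?D)) + (k - 1) * ?j"
      unfolding through using sum_card_Int_replace[OF fX SX fS True xD zD below] cS by simp
    moreover have "(k - 1) * ?j = 2 * ?j + (k - 3) * ?j"
    proof -
      have "k - 1 = 2 + (k - 3)" using assms(2) by simp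
      then show ?thesis by (metis add_mult_distrib)
    qed
    moreover have "(k - 3) * desc_sum k (Suc ?c) = (k - 3) * desc_sum k ?c + (k - 3) * (k - Suc ?c)"
      by (simp add: desc_sum_Suc add_mult_distrib2)
    moreover have "(k - 3) * (k - Suc ?c) \<le> (k - 3) * ?j"
      using j_low by (intro mult_le_mono2) simp
    ultimately have "k * (k - 1) + (k - 3) * desc_sum k (Suc ?c)
                     \<le> (\<Sum>Q\<in>active_through k C (Suc s) (k + t). card (Q \<inter> ?D))"
      using sum_old by linarith
    then show ?thesis using min_new unfolding weight_invariant_def hit by simp
  qed
qed

lemma weight_invariant_holds:
  assumes "ap_valid k C m" "k \<ge> 3" "Suc t \<le> s" "s \<le> m"
  shows "weight_invariant k C t s"
  using assms(3,4)
proof (induction s rule: dec_induct)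
  case base
  then show ?case using weight_invariant_birth[OF assms(1)] by simp
next
  case (step s)
  then show ?case using weight_invariant_Suc[OF assms(1,2) step(1)] by simp
qed

lemma weight_sum_eq_sum_Nstar:
  assumes "ap_valid k C m" "Suc t \<le> m"
  shows "(\<Sum>Q\<in>active_through k C m (k + t). card (Q \<inter> C (Suc t)))
         = (\<Sum>v\<in>C (Suc t). Nstar k C m (k + t) v)"
proof -
  have fX: "finite (active_through k C m (k + t))"
    using finite_ap_active[OF assms(1) order_refl] unfolding active_through_def by simp
  have "C (Suc t) \<subseteq> {..<k + t}"
    using ap_active_subset[OF assms(1) _ chosen_clique_active[OF assms]] assms(2) by simp
  then have fD: "finite (C (Suc t))" using finite_subset by blast
  have "Nstar k C m (k + t) v = card {Q\<in>active_through k C m (k + t). v \<in> Q}" for v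
    unfolding Nstar_def active_through_def by (rule arg_cong[where f = card]) blast
  then show ?thesis using sum_card_Int_eq_sum_card_containing[OF fX fD] by simp
qed

lemma sum_Nstar_lower_bound:
  assumes "ap_valid k C m" "k \<ge> 3" "Suc t \<le> m" "k - 1 \<le> hits k C t m"
  shows "real k * (real k - 1)\<^sup>2 / 2 \<le> (\<Sum>v\<in>C (Suc t). real (Nstar k C m (k + t) v))"
proof -
  let ?d = "desc_sum k (k - 1)"
  have "k * (k - 1) + (k - 3) * ?d \<le> (\<Sum>v\<in>C (Suc t). Nstar k C m (k + t) v)"
  proof -
    have "(k - 3) * ?d \<le> (k - 3) * desc_sum k (hits k C t m)"
      using desc_sum_mono[OF assms(4)] by (rule mult_le_mono2)
    then show ?thesis
      using weight_invariant_holds[OF assms(1,2,3) order_refl] weight_sum_eq_sum_Nstar[OF assms(1,3)]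
      unfolding weight_invariant_def by linarith
  qed
  then have sum_bound: "real (k * (k - 1) + (k - 3) * ?d) \<le> (\<Sum>v\<in>C (Suc t). real (Nstar k C m (k + t) v))"
    unfolding of_nat_sum[symmetric] by (rule of_nat_mono)
  have "real ?d = (real k - 1) * real k / 2"
    using desc_sum_closed_form[of "k - 1" k] assms(2) by (simp add: algebra_simps)
  moreover have "real (k - 1) = real k - 1" "real (k - 3) = real k - 3" using assms(2) by auto
  ultimately have "real (k * (k - 1) + (k - 3) * ?d)
                   = real k * (real k - 1) + (real k - 3) * ((real k - 1) * real k / 2)"
    by (simp only: of_nat_add of_nat_mult)
  also have "\<dots> = real k * (real k - 1)\<^sup>2 / 2"
    by (simp add: power2_eq_square field_simps)
  finally show ?thesis using sum_bound by simp
qed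

lemma ap_degree_le_hits:
  assumes "ap_valid k C m" "Suc t \<le> m"
  shows "ap_degree k C m (k + t) \<le> k + hits k C t m"
proof -
  let ?R = "{r\<in>{Suc t<..m}. k + t \<in> C r}"
  have D: "card (C (Suc t)) = k" "C (Suc t) \<subseteq> {..<k + t}"
    using ap_active_cliques[OF assms(1), of t] chosen_clique_active[OF assms] assms(2) by auto
  then have "finite (C (Suc t))" using finite_subset by blast
  then have "ap_degree k C m (k + t) \<le> card (C (Suc t) \<union> (\<lambda>r. k + r - 1) ` ?R)"
    unfolding ap_degree_def by (intro card_mono ap_edges_neighbours[OF assms(1) order_refl]) simp
  also have "\<dots> \<le> card (C (Suc t)) + card ((\<lambda>r. k + r - 1) ` ?R)"
    by (rule card_Un_le)
  also have "\<dots> \<le> card (C (Suc t)) + card ?R"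
    using card_image_le[of ?R "\<lambda>r. k + r - 1"] by simp
  finally show ?thesis using D(1) unfolding hits_def by simp
qed

lemma forest_edge_later_endpoint:
  assumes "ap_valid k C m" "\<forall>t\<in>{1..m}. p t \<in> C t"
    and "{x, y} \<in> forest_edges k m p" "born k x > born k y"
  obtains t where "Suc t \<le> m" "x = k + t" "y = p (Suc t)"
proof -
  obtain t where t: "Suc t \<le> m" "{x, y} = {k + t, p (Suc t)}"
    using assms(3) unfolding forest_edges_def by (auto simp: Suc_le_eq gr0_conv_Suc)
  have "p (Suc t) \<in> C (Suc t)" using assms(2) t(1) by simp
  then have "p (Suc t) < k + t"
    using ap_active_subset[OF assms(1) _ chosen_clique_active[OF assms(1) t(1)]] t(1) by auto
  then have "born k (p (Suc t)) < born k (k + t)" unfolding born_def by (simp; linarith)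
  then have "x = k + t \<and> y = p (Suc t)"
    using t(2) assms(4) by (auto simp: doubleton_eq_iff)
  then show ?thesis using that t(1) by blast
qed

theorem lemma13:
  fixes k m :: nat and C :: "nat \<Rightarrow> nat set" and p :: "nat \<Rightarrow> nat" and x y :: nat
  assumes "k \<ge> 3" and "m \<ge> 1"
    and "ap_valid k C m"
    and "\<forall>t\<in>{1..m}. p t \<in> C t \<and>
           (\<forall>v\<in>C t. Nstar k C m (k + t - 1) v \<le> Nstar k C m (k + t - 1) (p t))"
    and "{x, y} \<in> forest_edges k m p"
    and "born k x > born k y"
    and "ap_degree k C m x \<ge> 2 * k - 1"
  shows "real (Nstar k C m x y) \<ge> (real k - 1)^2 / 2"
proof -
  obtain t where t: "Suc t \<le> m" "x = k + t" "y = p (Suc t)"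
    using forest_edge_later_endpoint[OF assms(3) _ assms(5,6)] assms(4) by blast
  have max: "\<forall>v\<in>C (Suc t). Nstar k C m x v \<le> Nstar k C m x y"
    using assms(4) t by fastforce
  have "k - 1 \<le> hits k C t m"
    using ap_degree_le_hits[OF assms(3) t(1)] assms(7) t(2) by simp
  then have "real k * (real k - 1)\<^sup>2 / 2 \<le> (\<Sum>v\<in>C (Suc t). real (Nstar k C m x v))"
    using sum_Nstar_lower_bound[OF assms(3,1) t(1)] t(2) by simp
  also have "\<dots> \<le> real k * real (Nstar k C m x y)"
    using sum_bounded_above[of "C (Suc t)" "\<lambda>v. real (Nstar k C m x v)"] max
      ap_active_card[OF assms(3) _ chosen_clique_active[OF assms(3) t(1)]] t(1) by simp
  finally show ?thesis using assms(1) by (simp add: field_simps)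
qed

end
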